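(* Assume $E\in\mathbb{S}^n_{++}$, $0<\alpha<1$ and $0\ne X\in\partial K_E(\alpha)$. Let $S:=\frac{1}{n-\alpha^2}\big(E^{-1}-\frac{\alpha^2}{\mathrm{tr}(E^{-1}X)}E^{-1}XE^{-1}\big)$ and $q(t):=\mathrm{tr}\big(((E+tX)S)^2\big)$. For every $0<\beta<1$ and $t>-1$, \[ \big(E(t)\in\mathbb{S}^n_{++}\big)\wedge\big(S\in\mathrm{int}(K_{E(t)}(\beta)^* )\big)\iff q(t)<\frac{1}{n-\beta^2}, \] where $E(t)=\frac{1}{1+t}(E+tX)$. Furthermore, $q$ is strictly convex, $q(0)=1/(n-\alpha^2)$ and $q'(0)<0$.
   Context: $\mathbb{S}^n$ is the space of real symmetric $n\times n$ matrices with trace inner product, $\mathbb{S}^n_{++}$ the positive definite matrices. For $E\in\mathbb{S}^n_{++}$: $\|X\|_E=\mathrm{tr}((E^{-1}X)^2)^{1/2}$, and for $\gamma>0$, $K_E(\gamma)=\{X\in\mathbb{S}^n:\mathrm{tr}(E^{-1}X)\ge\gamma\|X\|_E\}$; $K_E(\gamma)^*=\{S:\mathrm{tr}(XS)\ge0\ \forall X\in K_E(\gamma)\}$ is its dual cone with respect to the trace inner product; $\partial$ and $\mathrm{int}$ denote boundary and interior. *)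

theory Defs
  imports "HOL-Analysis.Analysis"
begin

definition sym_mats :: "(real^'n^'n) set" where
  "sym_mats = {A. transpose A = A}"

text \<open>Topology of the space of symmetric matrices (the Euclidean norm on real^'n^'n is
  the Frobenius norm, i.e. the norm of the trace inner product).\<close>
definition sym_top :: "(real^'n^'n) topology" where
  "sym_top = subtopology euclidean sym_mats"

definition pos_def :: "(real^'n^'n) set" where
  "pos_def = {A. transpose A = A \<and> (\<forall>x::real^'n. x \<noteq> 0 \<longrightarrow> x \<bullet> (A *v x) > 0)}"

definition normE :: "real^'n^'n \<Rightarrow> real^'n^'n \<Rightarrow> real" where
  "normE E X = sqrt (trace ((matrix_inv E ** X) ** (matrix_inv E ** X)))"

definition coneK :: "real^'n^'n \<Rightarrow> real \<Rightarrow> (real^'n^'n) set" where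
  "coneK E \<gamma> = {X \<in> sym_mats. trace (matrix_inv E ** X) \<ge> \<gamma> * normE E X}"

definition dual_cone :: "(real^'n^'n) set \<Rightarrow> (real^'n^'n) set" where
  "dual_cone K = {S \<in> sym_mats. \<forall>X\<in>K. trace (X ** S) \<ge> 0}"

definition strict_convex_on :: "real set \<Rightarrow> (real \<Rightarrow> real) \<Rightarrow> bool" where
  "strict_convex_on A f \<longleftrightarrow> convex A \<and>
    (\<forall>x\<in>A. \<forall>y\<in>A. \<forall>u. x \<noteq> y \<longrightarrow> 0 < u \<longrightarrow> u < 1 \<longrightarrow>
       f ((1 - u) * x + u * y) < (1 - u) * f x + u * f y)"

end

(*
  Choose W with W^T E W = I, so that E^-1 = W W^T.  The congruence X |-> W^T X W maps K_E(g)
  onto the circular cone {Y symmetric. g |Y| <= tr Y} around the identity, and |I|^2 = n.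
  The dual of that cone is the circular cone of parameter sqrt(n - g^2): the two half-aperture
  angles are complementary.  Hence, for E' positive definite, a symmetric S is interior to
  K_E'(b)^* iff
  sqrt(n - b^2) * tr((E'S)^2)^(1/2) < tr(E'S).

  S is chosen so that tr(ES) = 1 and tr(XS) = 0; thus tr(E(t)S) = 1/(1+t), and the condition
  becomes q(t) < 1/(n - b^2).  This inequality also forces E(t) to be positive definite: with
  S = R R^T, the matrix M = R^T (E + tX) R has trace 1 and (n - 1)|M|^2 < 1, and such an M is
  positive definite.  Finally q is a quadratic with leading coefficient |R^T X R|^2 > 0, value
  1/(n - a^2) at 0 and slope 2 tr(XSES) at 0, which is negative because tr(Y^3) <= |Y|^3 and
  tr(E^-1 X) = a |X|_E on the boundary.
*)

theory Submission
  imports Defs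
begin

lemma matrix_add_rdistrib: "((A::real^'n^'m) + B) ** C = A ** C + B ** C"
  by (simp add: matrix_matrix_mult_def vec_eq_iff sum.distrib distrib_right)

lemma matrix_diff_ldistrib: "(A::real^'n^'m) ** (B - C) = A ** B - A ** C"
  by (simp add: matrix_matrix_mult_def vec_eq_iff sum_subtractf right_diff_distrib)

lemma matrix_diff_rdistrib: "((A::real^'n^'m) - B) ** C = A ** C - B ** C"
  by (simp add: matrix_matrix_mult_def vec_eq_iff sum_subtractf left_diff_distrib)

lemmas matrix_scaleR_left = scalar_matrix_assoc[symmetric]

lemma matrix_scaleR_right: "(A::real^'n^'m) ** (k *\<^sub>R B) = k *\<^sub>R (A ** B)"
  by (simp add: matrix_matrix_mult_def vec_eq_iff sum_distrib_left mult_ac)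

lemmas matrix_mult_distribs =
  matrix_add_ldistrib matrix_add_rdistrib matrix_diff_ldistrib matrix_diff_rdistrib
  matrix_scaleR_left matrix_scaleR_right

lemma transpose_add: "transpose ((A::'a::plus^'n^'m) + B) = transpose A + transpose B"
  by (simp add: transpose_def vec_eq_iff)

lemma transpose_diff: "transpose ((A::'a::minus^'n^'m) - B) = transpose A - transpose B"
  by (simp add: transpose_def vec_eq_iff)

lemma trace_scaleR: "trace (c *\<^sub>R (A::real^'n^'n)) = c * trace A"
  by (simp add: trace_def sum_distrib_left)

lemma matrix_inv_unique:
  fixes A B :: "real^'n^'n"
  assumes AB: "A ** B = mat 1"
  shows "matrix_inv A = B"
proof -
  have BA: "B ** A = mat 1" using AB matrix_left_right_inverse by blast
  have inv: "matrix_inv A ** A = mat 1"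
    unfolding matrix_inv_def by (rule someI2[of _ B]) (use AB BA in simp_all)
  have "matrix_inv A = matrix_inv A ** (A ** B)" using AB by simp
  also have "\<dots> = B" by (simp add: matrix_mul_assoc inv)
  finally show ?thesis .
qed

lemma invertible_matrix_inv:
  fixes A :: "real^'n^'n"
  assumes "invertible A"
  shows "A ** matrix_inv A = mat 1" and "matrix_inv A ** A = mat 1"
proof -
  obtain B where "A ** B = mat 1" using assms invertible_right_inverse by blast
  then show "A ** matrix_inv A = mat 1" "matrix_inv A ** A = mat 1"
    using matrix_inv_unique matrix_left_right_inverse by auto
qed

lemma inner_matrix_vector_transpose: "x \<bullet> ((A::real^'n^'m) *v y) = (transpose A *v x) \<bullet> y"
  by (simp add: dot_lmul_matrix)

lemma continuous_on_matrix_mult: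
  fixes f g :: "'a::topological_space \<Rightarrow> real^'n^'n"
  assumes "continuous_on S f" "continuous_on S g"
  shows "continuous_on S (\<lambda>x. f x ** g x)"
  unfolding matrix_matrix_mult_def using assms by (intro continuous_intros) auto

lemma continuous_on_trace:
  fixes f :: "'a::topological_space \<Rightarrow> real^'n^'n"
  assumes "continuous_on S f"
  shows "continuous_on S (\<lambda>x. trace (f x))"
  unfolding trace_def using assms by (intro continuous_intros) auto

section \<open>The trace inner product\<close>

lemma trace_transpose_mult_eq_inner: "trace (transpose A ** (B::real^'n^'m)) = A \<bullet> B"
  unfolding trace_def matrix_matrix_mult_def transpose_def inner_vec_def
  by simp (subst sum.swap, simp)

lemma trace_mult_eq_inner:
  assumes "transpose A = A" shows "trace (A ** (B::real^'n^'n)) = A \<bullet> B"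
  using trace_transpose_mult_eq_inner[of A B] assms by simp

lemma inner_mat1_eq_trace: "mat 1 \<bullet> (A::real^'n^'n) = trace A"
  using trace_transpose_mult_eq_inner[of "mat 1" A] by simp

lemma inner_mat1_mat1: "mat 1 \<bullet> (mat 1::real^'n^'n) = real CARD('n)"
  by (simp add: inner_mat1_eq_trace trace_I)

definition outer_prod :: "real^'n \<Rightarrow> real^'n^'n" where
  "outer_prod x = (\<chi> i j. x$i * x$j)"

lemma inner_outer_prod: "(Y::real^'n^'n) \<bullet> outer_prod x = x \<bullet> (Y *v x)"
  unfolding outer_prod_def inner_vec_def matrix_vector_mult_def
  by (simp add: sum_distrib_left mult_ac)

lemma outer_prod_inner_self: "outer_prod x \<bullet> outer_prod x = (x \<bullet> x)^2"
  unfolding outer_prod_def inner_vec_def power2_eq_square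
  by (simp add: sum_distrib_left sum_distrib_right mult_ac)

lemma inner_mat1_outer_prod: "mat 1 \<bullet> outer_prod x = x \<bullet> x"
  by (simp add: inner_commute[of "mat 1"] inner_outer_prod)

lemma norm_outer_prod: "norm (outer_prod x) = x \<bullet> x"
  by (simp add: norm_eq_sqrt_inner outer_prod_inner_self)

lemma quadratic_form_le_norm: "x \<bullet> ((Y::real^'n^'n) *v x) \<le> norm Y * (x \<bullet> x)"
  using norm_cauchy_schwarz[of Y "outer_prod x"] by (simp add: inner_outer_prod norm_outer_prod)

lemma symmetric_matrix_entry:
  assumes "transpose Y = Y" shows "Y $ i $ j = Y $ j $ i"
  by (metis assms transpose_def vec_lambda_beta)

lemma matrix_vector_mult_column: "(A::real^'n^'n) *v column j B = column j (A ** B)"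
  unfolding column_def matrix_vector_mult_def matrix_matrix_mult_def by (simp add: vec_eq_iff)

lemma trace_cube_eq_sum_columns:
  fixes Y :: "real^'n^'n"
  assumes "transpose Y = Y"
  shows "trace (Y ** Y ** Y) = (\<Sum>j\<in>UNIV. column j Y \<bullet> (Y *v column j Y))"
proof -
  have "trace (Y ** Y ** Y) = trace (Y ** (Y ** Y))" by (simp add: matrix_mul_assoc)
  also have "\<dots> = (\<Sum>j\<in>UNIV. \<Sum>l\<in>UNIV. Y $ j $ l * (Y ** Y) $ l $ j)"
    unfolding trace_def by (simp add: matrix_matrix_mult_def)
  also have "\<dots> = (\<Sum>j\<in>UNIV. column j Y \<bullet> column j (Y ** Y))"
    unfolding inner_vec_def column_def using symmetric_matrix_entry[OF assms] by simp
  finally show ?thesis by (simp add: matrix_vector_mult_column)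
qed

lemma trace_cube_le_norm_cube:
  fixes Y :: "real^'n^'n"
  assumes "transpose Y = Y"
  shows "trace (Y ** Y ** Y) \<le> norm Y ^ 3"
proof -
  have columns: "(\<Sum>j\<in>UNIV. column j Y \<bullet> column j Y) = Y \<bullet> Y"
    unfolding inner_vec_def column_def by simp (rule sum.swap)
  have "trace (Y ** Y ** Y) \<le> (\<Sum>j\<in>UNIV. norm Y * (column j Y \<bullet> column j Y))"
    unfolding trace_cube_eq_sum_columns[OF assms] by (rule sum_mono) (rule quadratic_form_le_norm)
  also have "\<dots> = norm Y * (Y \<bullet> Y)" by (simp add: sum_distrib_left[symmetric] columns)
  also have "\<dots> = norm Y ^ 3"
    by (simp add: power2_norm_eq_inner[symmetric] power3_eq_cube power2_eq_square)
  finally show ?thesis .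
qed

lemma trace_one_quadratic_form_pos:
  fixes M :: "real^'n^'n"
  assumes tr: "trace M = 1" and small: "(real CARD('n) - 1) * (M \<bullet> M) < 1" and "x \<noteq> 0"
  shows "x \<bullet> (M *v x) > 0"
proof (rule ccontr)
  assume "\<not> x \<bullet> (M *v x) > 0"
  define G where "G = (x \<bullet> x) *\<^sub>R mat 1 - outer_prod x"
  have xx: "x \<bullet> x > 0" using \<open>x \<noteq> 0\<close> by simp
  have MG: "M \<bullet> G = (x \<bullet> x) - x \<bullet> (M *v x)"
    unfolding G_def by (simp add: inner_diff_right inner_outer_prod inner_commute[of M] inner_mat1_eq_trace tr)
  have GG: "G \<bullet> G = (x \<bullet> x)^2 * (real CARD('n) - 1)"
    unfolding G_def
    by (simp add: inner_diff_right inner_diff_left inner_mat1_mat1 inner_mat1_outer_prod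
        outer_prod_inner_self inner_commute[of "outer_prod x"] algebra_simps power2_eq_square)
  have "(x \<bullet> x)^2 \<le> (M \<bullet> G)^2"
    using MG \<open>\<not> x \<bullet> (M *v x) > 0\<close> xx by (intro power_mono) auto
  also have "\<dots> \<le> (M \<bullet> M) * (G \<bullet> G)"
    using Cauchy_Schwarz_ineq .
  finally have "(x \<bullet> x)^2 * 1 \<le> (x \<bullet> x)^2 * ((real CARD('n) - 1) * (M \<bullet> M))"
    unfolding GG by (simp add: mult_ac)
  then show False using xx small by (subst (asm) mult_le_cancel_left_pos) auto
qed

section \<open>Positive definite matrices\<close>

lemma pos_defD:
  assumes "P \<in> pos_def"
  shows "transpose P = P" and "x \<noteq> 0 \<Longrightarrow> x \<bullet> (P *v x) > 0"
  using assms unfolding pos_def_def by auto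

lemma symmetric_bilinear_form:
  fixes P :: "real^'n^'n"
  assumes "transpose P = P"
  shows "x \<bullet> (P *v y) = y \<bullet> (P *v x)"
  by (subst inner_matrix_vector_transpose) (simp add: assms inner_commute)

lemma matrix_vector_mult_sum: "(A::real^'n^'m) *v (\<Sum>c\<in>C. f c) = (\<Sum>c\<in>C. A *v f c)"
  by (induction C rule: infinite_finite_induct) (auto simp: matrix_vector_right_distrib)

definition orthonormal_wrt :: "real^'n^'n \<Rightarrow> (real^'n) set \<Rightarrow> bool" where
  "orthonormal_wrt P C \<longleftrightarrow>
     (\<forall>c\<in>C. c \<bullet> (P *v c) = 1) \<and> (\<forall>c\<in>C. \<forall>d\<in>C. c \<noteq> d \<longrightarrow> c \<bullet> (P *v d) = 0)"

lemma orthonormal_wrt_sum_coeff: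
  assumes "orthonormal_wrt P C" "finite C" "v \<in> C"
  shows "(\<Sum>w\<in>C. u w * (w \<bullet> (P *v v))) = u v"
proof -
  have "\<forall>w\<in>C - {v}. u w * (w \<bullet> (P *v v)) = 0"
    using assms(1,3) unfolding orthonormal_wrt_def by auto
  then show ?thesis
    using assms unfolding orthonormal_wrt_def by (subst sum.remove[of C v]) (auto simp: sum.neutral)
qed

lemma gram_schmidt_step:
  fixes P :: "real^'n^'n"
  assumes P: "P \<in> pos_def" and C: "orthonormal_wrt P C" "finite C" and b: "b \<notin> span C"
  obtains c where "orthonormal_wrt P (insert c C)" and "b \<in> span (insert c C)"
proof -
  define b' where "b' = b - (\<Sum>c\<in>C. (c \<bullet> (P *v b)) *\<^sub>R c)"
  have b'_nz: "b' \<noteq> 0"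
  proof
    assume "b' = 0"
    then have "b = (\<Sum>c\<in>C. (c \<bullet> (P *v b)) *\<^sub>R c)" unfolding b'_def by simp
    also have "\<dots> \<in> span C" by (intro span_sum span_scale span_base)
    finally show False using b by simp
  qed
  have b'_orth: "d \<bullet> (P *v b') = 0" if "d \<in> C" for d
  proof -
    have "d \<bullet> (P *v b') = d \<bullet> (P *v b) - (\<Sum>c\<in>C. (c \<bullet> (P *v b)) * (c \<bullet> (P *v d)))"
      unfolding b'_def
      by (simp add: matrix_vector_mult_diff_distrib matrix_vector_mult_sum inner_diff_right
          inner_sum_right matrix_vector_mult_scaleR symmetric_bilinear_form[OF pos_defD(1)[OF P], of d])
    then show ?thesis using orthonormal_wrt_sum_coeff[OF C that] by simp
  qed
  define r where "r = sqrt (b' \<bullet> (P *v b'))"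
  have r_pos: "r > 0" unfolding r_def using pos_defD(2)[OF P b'_nz] by simp
  define c where "c = (1 / r) *\<^sub>R b'"
  have c_unit: "c \<bullet> (P *v c) = 1"
    unfolding c_def using r_pos pos_defD(2)[OF P b'_nz]
    by (simp add: matrix_vector_mult_scaleR r_def power2_eq_square[symmetric])
  have c_orth: "d \<bullet> (P *v c) = 0" "c \<bullet> (P *v d) = 0" if "d \<in> C" for d
    using b'_orth[OF that] symmetric_bilinear_form[OF pos_defD(1)[OF P], of c d]
    by (auto simp: c_def matrix_vector_mult_scaleR)
  show thesis
  proof
    have "c \<notin> C" using c_orth c_unit by fastforce
    then show "orthonormal_wrt P (insert c C)"
      using C(1) c_unit c_orth unfolding orthonormal_wrt_def by auto
    have "b = r *\<^sub>R c + (\<Sum>c\<in>C. (c \<bullet> (P *v b)) *\<^sub>R c)"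
      unfolding c_def b'_def using r_pos by simp
    also have "\<dots> \<in> span (insert c C)"
      by (intro span_add span_scale span_sum span_base) auto
    finally show "b \<in> span (insert c C)" .
  qed
qed

lemma orthonormal_wrt_exists:
  fixes P :: "real^'n^'n"
  assumes P: "P \<in> pos_def" and "finite A"
  obtains C where "finite C" "A \<subseteq> span C" "orthonormal_wrt P C"
  using \<open>finite A\<close>
proof (induction A arbitrary: thesis rule: finite_induct)
  case empty
  show ?case by (rule empty[of "{}"]) (auto simp: orthonormal_wrt_def)
next
  case (insert b A)
  obtain C where C: "finite C" "A \<subseteq> span C" "orthonormal_wrt P C" using insert.IH by blast
  show ?case
  proof (cases "b \<in> span C")
    case True
    then show ?thesis using C insert.prems by blast
  next
    case False
    then obtain c where "orthonormal_wrt P (insert c C)" "b \<in> span (insert c C)"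
      using gram_schmidt_step[OF P C(3,1)] by blast
    moreover have "A \<subseteq> span (insert c C)" using C(2) span_mono[of C "insert c C"] by auto
    ultimately show ?thesis using C(1) insert.prems[of "insert c C"] by simp
  qed
qed

lemma orthonormal_wrt_independent:
  assumes "orthonormal_wrt P C" "finite C"
  shows "independent C"
proof
  assume "dependent C"
  then obtain u v where v: "v \<in> C" "u v \<noteq> 0" and "(\<Sum>w\<in>C. u w *\<^sub>R w) = 0"
    using dependent_finite[OF assms(2)] by auto
  then have "0 = (\<Sum>w\<in>C. u w *\<^sub>R w) \<bullet> (P *v v)" by simp
  also have "\<dots> = u v"
    by (simp add: inner_sum_left orthonormal_wrt_sum_coeff[OF assms v(1)])
  finally show False using v by simp
qed

lemma transpose_mult_mult_entry:
  fixes P W :: "real^'n^'n"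
  shows "(transpose W ** P ** W) $ i $ j = column i W \<bullet> (P *v column j W)"
proof -
  have "(transpose W ** P ** W) $ i $ j = (\<Sum>k\<in>UNIV. \<Sum>l\<in>UNIV. W$l$i * P$l$k * W$k$j)"
    by (simp add: matrix_matrix_mult_def transpose_def sum_distrib_right)
  also have "\<dots> = (\<Sum>l\<in>UNIV. \<Sum>k\<in>UNIV. W$l$i * P$l$k * W$k$j)"
    by (rule sum.swap)
  also have "\<dots> = column i W \<bullet> (P *v column j W)"
    by (simp add: column_def inner_vec_def matrix_vector_mult_def sum_distrib_left mult.assoc)
  finally show ?thesis .
qed

lemma pos_def_congruent_mat1:
  fixes P :: "real^'n^'n"
  assumes P: "P \<in> pos_def"
  obtains W :: "real^'n^'n" where "transpose W ** P ** W = mat 1"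
proof -
  obtain C where finC: "finite C" and "Basis \<subseteq> span C" and C: "orthonormal_wrt P C"
    using orthonormal_wrt_exists[OF P, of Basis] by auto
  then have "UNIV \<subseteq> span C"
    by (metis span_Basis span_minimal subspace_span)
  then have "card C = CARD('n)"
    using dim_unique[OF subset_UNIV _ orthonormal_wrt_independent[OF C finC] refl] by simp
  then obtain f where f: "bij_betw f (UNIV::'n set) C"
    using finite_same_card_bij[of "UNIV::'n set" C] finC by auto
  define W :: "real^'n^'n" where "W = (\<chi> i j. f j $ i)"
  have "f i \<bullet> (P *v f j) = (if i = j then 1 else 0)" for i j
    using C bij_betw_apply[OF f] bij_betw_imp_inj_on[OF f]
    unfolding orthonormal_wrt_def inj_on_def by (metis UNIV_I)
  then have "transpose W ** P ** W = mat 1"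
    by (simp add: vec_eq_iff transpose_mult_mult_entry mat_def W_def column_def)
  then show thesis by (rule that)
qed

lemma matrix_mul_triple_right_id:
  fixes A B C Z :: "real^'n^'n"
  assumes "A ** B ** C = mat 1"
  shows "Z ** A ** B ** C = Z"
  by (metis assms matrix_mul_assoc matrix_mul_rid)

lemma congruent_mat1_inverse:
  fixes P W :: "real^'n^'n"
  assumes WPW: "transpose W ** P ** W = mat 1"
  shows "W ** transpose W ** P = mat 1" and "P ** W ** transpose W = mat 1"
    and "matrix_inv P = W ** transpose W"
proof -
  have "W ** (transpose W ** P) = mat 1" using WPW matrix_left_right_inverse by blast
  then show WWP: "W ** transpose W ** P = mat 1" by (simp add: matrix_mul_assoc)
  then have PWW: "P ** (W ** transpose W) = mat 1" using matrix_left_right_inverse by blast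
  then show "P ** W ** transpose W = mat 1" by (simp add: matrix_mul_assoc)
  show "matrix_inv P = W ** transpose W" using matrix_inv_unique[OF PWW] .
qed

lemma pos_def_factorization:
  fixes P :: "real^'n^'n"
  assumes P: "P \<in> pos_def"
  obtains R :: "real^'n^'n" where "invertible R" "P = R ** transpose R"
proof -
  obtain W :: "real^'n^'n" where WPW: "transpose W ** P ** W = mat 1"
    using pos_def_congruent_mat1[OF P] by blast
  then have "W ** (transpose W ** P) = mat 1"
    using congruent_mat1_inverse(1) by (simp add: matrix_mul_assoc)
  then have "invertible W" using invertible_right_inverse by blast
  define V where "V = matrix_inv W"
  have WV: "W ** V = mat 1" and VW: "V ** W = mat 1"
    unfolding V_def using invertible_matrix_inv[OF \<open>invertible W\<close>] by auto
  then have "invertible V" using invertible_right_inverse by blast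
  have "P = (transpose V ** transpose W) ** P ** (W ** V)"
    by (simp add: WV flip: matrix_transpose_mul)
  also have "\<dots> = transpose V ** (transpose W ** P ** W) ** V"
    by (simp add: matrix_mul_assoc)
  also have "\<dots> = transpose V ** V"
    using WPW by simp
  finally show thesis
    using that[of "transpose V"] transpose_invertible[OF \<open>invertible V\<close>] by simp
qed

lemma pos_def_of_congruence:
  fixes R N :: "real^'n^'n"
  assumes "invertible R" and "transpose N = N" and "transpose R ** N ** R \<in> pos_def"
  shows "N \<in> pos_def"
  unfolding pos_def_def
proof (intro CollectI conjI allI impI)
  show "transpose N = N" by fact
  fix x :: "real^'n" assume "x \<noteq> 0"
  define z where "z = matrix_inv R *v x"
  have Rz: "R *v z = x"
    unfolding z_def using invertible_matrix_inv[OF assms(1)] by (simp add: matrix_vector_mul_assoc)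
  then have "z \<noteq> 0" using \<open>x \<noteq> 0\<close> by auto
  have "z \<bullet> ((transpose R ** N ** R) *v z) = z \<bullet> (transpose R *v (N *v (R *v z)))"
    by (simp add: matrix_vector_mul_assoc matrix_mul_assoc)
  also have "\<dots> = (R *v z) \<bullet> (N *v (R *v z))"
    using inner_matrix_vector_transpose[of z "transpose R" "N *v (R *v z)"] by simp
  finally show "x \<bullet> (N *v x) > 0" using pos_defD(2)[OF assms(3) \<open>z \<noteq> 0\<close>] Rz by simp
qed

lemma pos_def_scaleR:
  assumes "N \<in> pos_def" "c > 0"
  shows "c *\<^sub>R N \<in> pos_def"
  using assms unfolding pos_def_def
  by (auto simp: transpose_scalar scaleR_matrix_vector_assoc[symmetric])

section \<open>Circular cones\<close>

definition circular_cone :: "'a::real_inner \<Rightarrow> real \<Rightarrow> 'a set" where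
  "circular_cone u \<beta> = {y. \<beta> * norm y \<le> u \<bullet> y}"

lemma norm_minus_projection:
  fixes u y :: "'a::real_inner"
  assumes "u \<bullet> u = n" "n > 0"
  shows "norm (y - ((u \<bullet> y) / n) *\<^sub>R u)^2 = norm y ^ 2 - (u \<bullet> y)^2 / n"
  using assms unfolding power2_norm_eq_inner
  by (simp add: inner_diff_left inner_diff_right inner_commute[of y u] field_simps power2_eq_square)

lemma circular_cone_transverse_bound:
  fixes u y :: "'a::real_inner"
  assumes u: "u \<bullet> u = n" "n > 0" and "\<beta> > 0" and y: "y \<in> circular_cone u \<beta>"
  shows "norm (y - ((u \<bullet> y) / n) *\<^sub>R u)^2 \<le> (u \<bullet> y)^2 * (n - \<beta>^2) / (n * \<beta>^2)"
proof -
  have "norm y \<le> (u \<bullet> y) / \<beta>"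
    using y \<open>\<beta> > 0\<close> by (simp add: circular_cone_def field_simps)
  then have "norm y ^ 2 \<le> ((u \<bullet> y) / \<beta>)^2" by (rule power_mono) simp
  moreover have "((u \<bullet> y) / \<beta>)^2 - (u \<bullet> y)^2 / n = (u \<bullet> y)^2 * (n - \<beta>^2) / (n * \<beta>^2)"
    using u \<open>\<beta> > 0\<close> by (simp add: field_simps power2_eq_square)
  ultimately show ?thesis by (simp add: norm_minus_projection[OF u])
qed

context
  fixes u :: "'a::real_inner" and n \<beta> s :: real
  assumes u: "u \<bullet> u = n" and \<beta>: "\<beta> > 0" and s: "s > 0" and s\<beta>: "s^2 + \<beta>^2 = n"
begin

lemma circular_cone_n_pos: "n > 0"
  using s\<beta> zero_le_power2[of s] zero_less_power[OF \<beta>, of 2] by linarith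

lemma circular_cones_inner_nonneg:
  assumes y: "y \<in> circular_cone u \<beta>" and t: "t \<in> circular_cone u s"
  shows "y \<bullet> t \<ge> 0"
proof -
  note n = circular_cone_n_pos
  define a where "a = u \<bullet> y"
  define c where "c = u \<bullet> t"
  define y0 where "y0 = y - (a/n) *\<^sub>R u"
  define t0 where "t0 = t - (c/n) *\<^sub>R u"
  have "0 \<le> \<beta> * norm y" "0 \<le> s * norm t" using \<beta> s by simp_all
  then have "a \<ge> 0" "c \<ge> 0" using y t unfolding a_def c_def circular_cone_def by simp_all
  have yt: "y \<bullet> t = a*c/n + y0 \<bullet> t0"
    unfolding y0_def t0_def using n
    by (simp add: inner_diff_left inner_diff_right a_def c_def u inner_commute[of y u] field_simps)
  have n\<beta>: "n - \<beta>^2 = s^2" and ns: "n - s^2 = \<beta>^2" using s\<beta> by linarith+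
  have "norm y0 ^ 2 \<le> a^2 * s^2 / (n * \<beta>^2)"
    using circular_cone_transverse_bound[OF u n \<beta> y] unfolding y0_def a_def n\<beta> .
  moreover have "norm t0 ^ 2 \<le> c^2 * \<beta>^2 / (n * s^2)"
    using circular_cone_transverse_bound[OF u n s t] unfolding t0_def c_def ns .
  ultimately have "(norm y0 * norm t0)^2 \<le> (a^2 * s^2 / (n * \<beta>^2)) * (c^2 * \<beta>^2 / (n * s^2))"
    unfolding power_mult_distrib using n by (intro mult_mono) auto
  also have "\<dots> = (a*c/n)^2" using \<beta> s n by (simp add: field_simps power2_eq_square)
  finally have "(norm y0 * norm t0)^2 \<le> (a*c/n)^2" .
  moreover have "0 \<le> a*c/n" using \<open>a \<ge> 0\<close> \<open>c \<ge> 0\<close> n by simp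
  ultimately have "norm y0 * norm t0 \<le> a*c/n" by (rule power2_le_imp_le)
  moreover have "- (y0 \<bullet> t0) \<le> norm y0 * norm t0"
    using norm_cauchy_schwarz[of "- y0" t0] by simp
  ultimately show ?thesis using yt by linarith
qed

lemma in_circular_cone_if_inner_nonneg:
  assumes H: "\<And>a b. a *\<^sub>R u + b *\<^sub>R t \<in> circular_cone u \<beta> \<Longrightarrow> (a *\<^sub>R u + b *\<^sub>R t) \<bullet> t \<ge> 0"
  shows "t \<in> circular_cone u s"
proof -
  note n = circular_cone_n_pos
  define c where "c = u \<bullet> t"
  define t0 where "t0 = t - (c/n) *\<^sub>R u"
  define d where "d = norm t0"
  define \<mu> where "\<mu> = sqrt n * s / \<beta>"
  have \<mu>2: "\<mu>^2 = n * s^2 / \<beta>^2"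
    unfolding \<mu>_def using n by (simp add: power_mult_distrib power_divide)
  have ut0: "u \<bullet> t0 = 0" unfolding t0_def c_def using n by (simp add: inner_diff_right u)
  have nt: "norm t ^ 2 = d^2 + c^2/n"
    using norm_minus_projection[OF u n, of t] unfolding d_def t0_def c_def by simp
  \<comment> \<open>The boundary ray of the \<open>\<beta>\<close>-cone in the plane of \<open>u\<close> and \<open>t\<close> farthest from \<open>t\<close>;
    for \<open>t0 = 0\<close> it degenerates to \<open>u\<close>, since \<open>\<mu> / 0 = 0\<close>.\<close>
  define y where "y = u - (\<mu> / d) *\<^sub>R t0"
  have "\<mu> * d \<le> c"
  proof -
    have "y = (1 + \<mu> * c / (n * d)) *\<^sub>R u + (- \<mu> / d) *\<^sub>R t"
      unfolding y_def t0_def using n by (cases "d = 0") (simp_all add: algebra_simps)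
    moreover have "y \<in> circular_cone u \<beta>"
    proof (cases "d = 0")
      case True
      have "\<beta>^2 \<le> n" using s\<beta> zero_le_power2[of s] by linarith
      then have "\<beta> * sqrt n \<le> sqrt n * sqrt n" using n \<beta> by (intro mult_right_mono) (auto intro: real_le_rsqrt)
      then show ?thesis using True u n by (simp add: y_def circular_cone_def norm_eq_sqrt_inner)
    next
      case False
      have "t0 \<bullet> t0 = d^2" by (simp add: d_def power2_norm_eq_inner)
      then have "norm y ^ 2 = n + (\<mu> / d)^2 * d^2"
        unfolding y_def power2_norm_eq_inner using ut0
        by (simp add: inner_diff_left inner_diff_right u inner_commute[of t0 u] power2_eq_square)
      also have "\<dots> = n + \<mu>^2" using False by (simp add: power_divide)
      also have "\<dots> = (n / \<beta>)^2" unfolding \<mu>2 s\<beta>[symmetric] using \<beta> by (simp add: field_simps power2_eq_square)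
      finally have "norm y = n / \<beta>" using n \<beta> by simp
      then show ?thesis using \<beta> ut0 by (simp add: y_def circular_cone_def inner_diff_right u)
    qed
    ultimately have "y \<bullet> t \<ge> 0" using H by metis
    moreover have "y \<bullet> t = c - \<mu> * d"
    proof -
      have "t0 \<bullet> t = t0 \<bullet> (t0 + (c/n) *\<^sub>R u)" unfolding t0_def by simp
      also have "\<dots> = d^2"
        using ut0 by (simp add: inner_add_right inner_commute[of u t0] d_def power2_norm_eq_inner)
      finally have "y \<bullet> t = c - (\<mu> / d) * d^2" by (simp add: y_def inner_diff_left c_def)
      then show ?thesis by (simp add: power2_eq_square)
    qed
    ultimately show ?thesis by simp
  qed
  have "0 \<le> \<mu> * d" unfolding \<mu>_def d_def using n \<beta> s by simp
  then have "(\<mu> * d)^2 \<le> c^2" using \<open>\<mu> * d \<le> c\<close> by (intro power_mono)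
  then have "n * (s^2 * d^2) / \<beta>^2 \<le> c^2"
    unfolding power_mult_distrib \<mu>2 by (simp add: mult.assoc)
  then have "n * (s^2 * d^2) \<le> c^2 * \<beta>^2" using \<beta> by (simp add: pos_divide_le_eq)
  then have "s^2 * d^2 \<le> c^2 * \<beta>^2 / n" using n by (simp add: pos_le_divide_eq mult.commute)
  then have "(s * norm t)^2 \<le> c^2 * \<beta>^2 / n + s^2 * c^2 / n"
    unfolding power_mult_distrib nt by (simp add: algebra_simps)
  also have "\<dots> = c^2 * (s^2 + \<beta>^2) / n" by (simp add: algebra_simps add_divide_distrib)
  finally have "(s * norm t)^2 \<le> c^2" using n unfolding s\<beta> by simp
  moreover have "0 \<le> c" using \<open>0 \<le> \<mu> * d\<close> \<open>\<mu> * d \<le> c\<close> by linarith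
  ultimately have "s * norm t \<le> c" by (rule power2_le_imp_le)
  then show ?thesis unfolding circular_cone_def c_def by simp
qed

lemma boundary_circular_cone_shift:
  assumes eq: "u \<bullet> t = s * norm t" and dl: "\<delta> > 0"
  shows "t - \<delta> *\<^sub>R u \<notin> circular_cone u s"
proof -
  note n = circular_cone_n_pos
  define c where "c = u \<bullet> t"
  have lhs: "u \<bullet> (t - \<delta> *\<^sub>R u) = c - \<delta> * n" by (simp add: c_def inner_diff_right u)
  have nn: "(norm (t - \<delta> *\<^sub>R u))^2 = (norm t)^2 - 2*\<delta>*c + \<delta>^2 * n"
    unfolding power2_norm_eq_inner
    by (simp add: power2_norm_eq_inner c_def u inner_commute[of t u]
        power2_eq_square algebra_simps)
  have "c - \<delta> * n < s * norm (t - \<delta> *\<^sub>R u)"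
  proof (cases "c - \<delta> * n < 0")
    case True
    have "0 \<le> s * norm (t - \<delta> *\<^sub>R u)" using s by simp
    then show ?thesis using True by linarith
  next
    case False
    have "\<delta> * n > 0" using dl n by simp
    then have cpos: "c > 0" using False by linarith
    have sc: "s^2 * (norm t)^2 = c^2" using eq by (simp add: c_def power_mult_distrib)
    have "(c - \<delta>*n)^2 < s^2 * (norm (t - \<delta> *\<^sub>R u))^2"
    proof -
      have "s^2 * (norm (t - \<delta> *\<^sub>R u))^2 - (c - \<delta>*n)^2 = \<delta> * \<beta>^2 * (2*c - \<delta>*n)"
        unfolding nn s\<beta>[symmetric] using sc by (simp add: algebra_simps power2_eq_square)
      moreover have "\<delta> * \<beta>^2 * (2*c - \<delta>*n) > 0" using dl \<beta> cpos False by simp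
      ultimately show ?thesis by simp
    qed
    then have "(c - \<delta>*n)^2 < (s * norm (t - \<delta> *\<^sub>R u))^2" by (simp add: power_mult_distrib)
    moreover have "0 \<le> s * norm (t - \<delta> *\<^sub>R u)" using s by simp
    ultimately show ?thesis by (rule power_less_imp_less_base)
  qed
  then show ?thesis using lhs by (simp add: circular_cone_def)
qed

end

section \<open>The cones \<open>K_E(\<gamma>)\<close> and their duals\<close>

lemma sym_mats_iff: "X \<in> sym_mats \<longleftrightarrow> transpose X = X"
  by (simp add: sym_mats_def)

lemma transpose_congruence:
  fixes X W :: "real^'n^'n"
  assumes "transpose X = X"
  shows "transpose (transpose W ** X ** W) = transpose W ** X ** W"
  using assms by (simp add: matrix_transpose_mul matrix_mul_assoc)

lemma trace_congruence:
  fixes X W :: "real^'n^'n"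
  shows "trace (transpose W ** X ** W) = trace (X ** (W ** transpose W))"
proof -
  have "trace (transpose W ** X ** W) = trace (transpose W ** (X ** W))" by (simp add: matrix_mul_assoc)
  also have "\<dots> = trace (X ** W ** transpose W)" by (rule trace_mul_sym)
  finally show ?thesis by (simp add: matrix_mul_assoc)
qed

lemma complementary_aperture:
  assumes "0 < \<beta>" "\<beta> < 1"
  shows "sqrt (real CARD('n::finite) - \<beta>^2) > 0" and "sqrt (real CARD('n) - \<beta>^2)^2 + \<beta>^2 = real CARD('n)"
proof -
  have "\<beta>^2 < 1" using assms by (simp add: power_less_one_iff abs_less_iff)
  moreover have "real CARD('n) \<ge> 1" by simp
  ultimately have "real CARD('n) - \<beta>^2 > 0" by linarith
  then show "sqrt (real CARD('n) - \<beta>^2) > 0" "sqrt (real CARD('n) - \<beta>^2)^2 + \<beta>^2 = real CARD('n)"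
    by simp_all
qed

context
  fixes P W :: "real^'n^'n"
  assumes WPW: "transpose W ** P ** W = mat 1"
begin

lemma trace_matrix_inv_mult_congruence:
  "trace (matrix_inv P ** X) = mat 1 \<bullet> (transpose W ** X ** W)"
  unfolding inner_mat1_eq_trace trace_congruence congruent_mat1_inverse(3)[OF WPW, symmetric]
  by (rule trace_mul_sym)

lemma trace_square_congruence:
  assumes sX: "transpose X = X"
  shows "trace ((matrix_inv P ** X) ** (matrix_inv P ** X)) = norm (transpose W ** X ** W) ^ 2"
proof -
  have "trace ((matrix_inv P ** X) ** (matrix_inv P ** X))
      = trace (W ** (transpose W ** X ** W ** transpose W ** X))"
    unfolding congruent_mat1_inverse(3)[OF WPW] by (simp add: matrix_mul_assoc)
  also have "\<dots> = trace ((transpose W ** X ** W ** transpose W ** X) ** W)"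
    by (rule trace_mul_sym)
  also have "\<dots> = trace ((transpose W ** X ** W) ** (transpose W ** X ** W))"
    by (simp add: matrix_mul_assoc)
  also have "\<dots> = norm (transpose W ** X ** W) ^ 2"
    unfolding power2_norm_eq_inner by (rule trace_mult_eq_inner[OF transpose_congruence[OF sX]])
  finally show ?thesis .
qed

lemma normE_congruence:
  assumes "transpose X = X"
  shows "normE P X = norm (transpose W ** X ** W)"
  unfolding normE_def trace_square_congruence[OF assms] by simp

lemma trace_mult_congruence:
  assumes "transpose X = X"
  shows "trace (X ** S) = (transpose W ** X ** W) \<bullet> (transpose W ** P ** S ** P ** W)"
proof -
  have "(transpose W ** X ** W) \<bullet> (transpose W ** P ** S ** P ** W)
      = trace (transpose W ** X ** W ** transpose W ** P ** S ** P ** W)"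
    using trace_mult_eq_inner[OF transpose_congruence[OF assms], of W "transpose W ** P ** S ** P ** W"]
    by (simp add: matrix_mul_assoc)
  also have "\<dots> = trace (transpose W ** (X ** S ** P ** W))"
    using matrix_mul_triple_right_id[OF congruent_mat1_inverse(1)[OF WPW]]
    by (simp add: matrix_mul_assoc)
  also have "\<dots> = trace (X ** S ** P ** W ** transpose W)"
    by (subst trace_mul_sym) (simp add: matrix_mul_assoc)
  also have "\<dots> = trace (X ** S)"
    using matrix_mul_triple_right_id[OF congruent_mat1_inverse(2)[OF WPW]] by simp
  finally show ?thesis by simp
qed

lemma coneK_congruence:
  "X \<in> coneK P \<beta> \<longleftrightarrow> transpose X = X \<and> transpose W ** X ** W \<in> circular_cone (mat 1) \<beta>"
  by (auto simp: coneK_def circular_cone_def sym_mats_iff normE_congruence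
      trace_matrix_inv_mult_congruence)

lemma congruence_inverse_image:
  "transpose W ** (P ** W ** Y ** transpose W ** P) ** W = Y"
proof -
  have "transpose W ** (P ** W ** Y ** transpose W ** P) ** W
      = transpose W ** P ** W ** Y ** transpose W ** P ** W"
    by (simp add: matrix_mul_assoc)
  then show ?thesis using WPW matrix_mul_triple_right_id[OF WPW] by simp
qed

lemma dual_coneK_congruence:
  assumes \<beta>: "0 < \<beta>" "\<beta> < 1" and sS: "transpose S = S" and sP: "transpose P = P"
  shows "S \<in> dual_cone (coneK P \<beta>) \<longleftrightarrow>
    transpose W ** P ** S ** P ** W \<in> circular_cone (mat 1) (sqrt (real CARD('n) - \<beta>^2))"
proof -
  define T where "T = transpose W ** P ** S ** P ** W"
  define s where "s = sqrt (real CARD('n) - \<beta>^2)"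
  have s: "s > 0" "s^2 + \<beta>^2 = real CARD('n)" unfolding s_def using complementary_aperture[OF \<beta>] by auto
  note cones = inner_mat1_mat1 \<beta>(1) s
  have sT: "transpose T = T" unfolding T_def
    by (simp add: matrix_transpose_mul sP sS matrix_mul_assoc)
  have "S \<in> dual_cone (coneK P \<beta>) \<longleftrightarrow>
      (\<forall>Y. transpose Y = Y \<longrightarrow> Y \<in> circular_cone (mat 1) \<beta> \<longrightarrow> Y \<bullet> T \<ge> 0)"
  proof (intro iffI allI impI)
    fix Y :: "real^'n^'n"
    assume S: "S \<in> dual_cone (coneK P \<beta>)" and sY: "transpose Y = Y"
      and Y: "Y \<in> circular_cone (mat 1) \<beta>"
    define X where "X = P ** W ** Y ** transpose W ** P"
    have sX: "transpose X = X" unfolding X_def using sY sP by (simp add: matrix_transpose_mul matrix_mul_assoc)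
    have YX: "transpose W ** X ** W = Y" unfolding X_def by (rule congruence_inverse_image)
    have "X \<in> coneK P \<beta>" using coneK_congruence sX YX Y by simp
    then show "Y \<bullet> T \<ge> 0"
      using S trace_mult_congruence[OF sX] YX unfolding dual_cone_def T_def by auto
  next
    assume H: "\<forall>Y. transpose Y = Y \<longrightarrow> Y \<in> circular_cone (mat 1) \<beta> \<longrightarrow> Y \<bullet> T \<ge> 0"
    show "S \<in> dual_cone (coneK P \<beta>)"
      unfolding dual_cone_def
    proof (intro CollectI conjI ballI)
      show "S \<in> sym_mats" using sS by (simp add: sym_mats_iff)
      fix X assume "X \<in> coneK P \<beta>"
      then have sX: "transpose X = X" and "transpose W ** X ** W \<in> circular_cone (mat 1) \<beta>"
        using coneK_congruence by auto
      then show "trace (X ** S) \<ge> 0"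
        using H transpose_congruence[OF sX] by (simp add: trace_mult_congruence[OF sX] T_def)
    qed
  qed
  also have "\<dots> \<longleftrightarrow> T \<in> circular_cone (mat 1) s"
  proof
    assume H: "\<forall>Y. transpose Y = Y \<longrightarrow> Y \<in> circular_cone (mat 1) \<beta> \<longrightarrow> Y \<bullet> T \<ge> 0"
    show "T \<in> circular_cone (mat 1) s"
    proof (rule in_circular_cone_if_inner_nonneg[OF cones])
      fix a b :: real
      have "transpose (a *\<^sub>R mat 1 + b *\<^sub>R T) = a *\<^sub>R mat 1 + b *\<^sub>R T"
        using sT by (simp add: transpose_add transpose_scalar)
      then show "a *\<^sub>R mat 1 + b *\<^sub>R T \<in> circular_cone (mat 1) \<beta> \<Longrightarrow> (a *\<^sub>R mat 1 + b *\<^sub>R T) \<bullet> T \<ge> 0"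
        using H by blast
    qed
  qed (use circular_cones_inner_nonneg[OF cones] in blast)
  finally show ?thesis unfolding T_def s_def .
qed

end

lemma in_sym_top_interior_of:
  fixes f :: "real^'n^'n \<Rightarrow> real"
  assumes "continuous_on UNIV f" and "\<And>Z. transpose Z = Z \<Longrightarrow> f Z > 0 \<Longrightarrow> Z \<in> D"
    and "transpose S = S" and "f S > 0"
  shows "S \<in> sym_top interior_of D"
proof -
  have "open {Z. 0 < f Z}" by (intro open_Collect_less assms(1) continuous_on_const)
  then have "openin sym_top (sym_mats \<inter> {Z. 0 < f Z})" unfolding sym_top_def openin_open by blast
  moreover have "sym_mats \<inter> {Z. 0 < f Z} \<subseteq> D" using assms(2) by (auto simp: sym_mats_iff)
  moreover have "S \<in> sym_mats \<inter> {Z. 0 < f Z}" using assms(3,4) by (simp add: sym_mats_iff)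
  ultimately show ?thesis unfolding interior_of_def by blast
qed

lemma sym_top_interior_ofE:
  assumes "S \<in> sym_top interior_of D"
  obtains e where "e > 0" and "\<And>Z. transpose Z = Z \<Longrightarrow> dist Z S < e \<Longrightarrow> Z \<in> D"
proof -
  obtain U where "openin sym_top U" "S \<in> U" "U \<subseteq> D"
    using assms unfolding interior_of_def by blast
  then obtain V where "open V" "U = sym_mats \<inter> V"
    unfolding sym_top_def openin_open by blast
  then obtain e where "e > 0" "ball S e \<subseteq> V"
    using \<open>S \<in> U\<close> open_contains_ball by blast
  moreover have "Z \<in> D" if "transpose Z = Z" "dist Z S < e" for Z
  proof -
    have "Z \<in> V" using that(2) \<open>ball S e \<subseteq> V\<close> by (auto simp: dist_commute)
    moreover have "Z \<in> sym_mats" using that(1) by (simp add: sym_mats_iff)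
    ultimately show ?thesis using \<open>U = sym_mats \<inter> V\<close> \<open>U \<subseteq> D\<close> by blast
  qed
  ultimately show thesis using that by blast
qed

lemma frontier_coneK:
  fixes E X :: "real^'n^'n"
  assumes X: "X \<in> sym_top frontier_of (coneK E \<alpha>)"
  shows "transpose X = X" and "trace (matrix_inv E ** X) = \<alpha> * normE E X"
proof -
  define g where "g = (\<lambda>Z. trace (matrix_inv E ** Z) - \<alpha> * normE E Z)"
  have g: "continuous_on UNIV g" unfolding g_def normE_def
    by (intro continuous_intros continuous_on_trace continuous_on_matrix_mult)
  have K: "coneK E \<alpha> = sym_mats \<inter> {Z. 0 \<le> g Z}" unfolding coneK_def g_def by auto
  have "closed {Z. 0 \<le> g Z}" by (intro closed_Collect_le g continuous_on_const)
  then have "closedin sym_top (coneK E \<alpha>)" unfolding sym_top_def closedin_closed K by blast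
  then have "X \<in> coneK E \<alpha>" and interior: "X \<notin> sym_top interior_of (coneK E \<alpha>)"
    using X closure_of_closedin unfolding frontier_of_def by fastforce+
  then have sX: "transpose X = X" and "g X \<ge> 0" unfolding K by (auto simp: sym_mats_iff)
  moreover have "\<not> g X > 0"
    using in_sym_top_interior_of[OF g _ sX] interior K by (auto simp: sym_mats_iff)
  ultimately show "transpose X = X" "trace (matrix_inv E ** X) = \<alpha> * normE E X"
    unfolding g_def by auto
qed

lemma interior_dual_coneK_iff:
  fixes P S :: "real^'n^'n"
  assumes P: "P \<in> pos_def" and \<beta>: "0 < \<beta>" "\<beta> < 1" and sS: "transpose S = S"
  shows "S \<in> sym_top interior_of dual_cone (coneK P \<beta>) \<longleftrightarrow>
    sqrt (real CARD('n) - \<beta>^2) * sqrt (trace ((P ** S) ** (P ** S))) < trace (P ** S)"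
proof -
  obtain W :: "real^'n^'n" where WPW: "transpose W ** P ** W = mat 1"
    using pos_def_congruent_mat1[OF P] by blast
  have sP: "transpose P = P" using pos_defD(1)[OF P] .
  have PiP: "matrix_inv P ** P = mat 1"
    using congruent_mat1_inverse[OF WPW] by simp
  define T where "T = (\<lambda>Z. transpose W ** P ** Z ** P ** W)"
  define s where "s = sqrt (real CARD('n) - \<beta>^2)"
  define D where "D = dual_cone (coneK P \<beta>)"
  have s: "s > 0" "s^2 + \<beta>^2 = real CARD('n)" unfolding s_def using complementary_aperture[OF \<beta>] by auto
  have member: "Z \<in> D \<longleftrightarrow> T Z \<in> circular_cone (mat 1) s" if "transpose Z = Z" for Z
    unfolding D_def T_def s_def using dual_coneK_congruence[OF WPW \<beta> that sP] .
  have sPSP: "transpose (P ** S ** P) = P ** S ** P" using sP sS by (simp add: matrix_transpose_mul matrix_mul_assoc)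
  have trT: "mat 1 \<bullet> T S = trace (P ** S)"
  proof -
    have "mat 1 \<bullet> T S = trace (matrix_inv P ** (P ** S ** P))"
      unfolding T_def trace_matrix_inv_mult_congruence[OF WPW] by (simp add: matrix_mul_assoc)
    also have "\<dots> = trace (S ** P)" by (simp add: matrix_mul_assoc PiP)
    finally show ?thesis using trace_mul_sym[of S P] by simp
  qed
  have nT: "norm (T S) = sqrt (trace ((P ** S) ** (P ** S)))"
  proof -
    have "norm (T S) = normE P (P ** S ** P)"
      unfolding T_def normE_congruence[OF WPW sPSP] by (simp add: matrix_mul_assoc)
    also have "\<dots> = sqrt (trace (S ** (P ** S ** P)))"
      unfolding normE_def by (simp add: matrix_mul_assoc PiP)
    also have "trace (S ** (P ** S ** P)) = trace ((P ** S) ** (P ** S))"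
      using trace_mul_sym[of S "P ** S ** P"] by (simp add: matrix_mul_assoc)
    finally show ?thesis .
  qed
  have "S \<in> sym_top interior_of D \<longleftrightarrow> s * norm (T S) < mat 1 \<bullet> T S"
  proof
    assume "S \<in> sym_top interior_of D"
    then obtain e where "e > 0" and ball: "\<And>Z. transpose Z = Z \<Longrightarrow> dist Z S < e \<Longrightarrow> Z \<in> D"
      by (rule sym_top_interior_ofE) blast
    show "s * norm (T S) < mat 1 \<bullet> T S"
    proof (rule ccontr)
      assume "\<not> s * norm (T S) < mat 1 \<bullet> T S"
      moreover have "T S \<in> circular_cone (mat 1) s" using ball[OF sS] \<open>e > 0\<close> member[OF sS] by simp
      ultimately have boundary: "mat 1 \<bullet> T S = s * norm (T S)" by (simp add: circular_cone_def)
      \<comment> \<open>Moving \<open>S\<close> towards \<open>- P\<inverse>\<close> shifts \<open>T S\<close> along \<open>- mat 1\<close>, out of the cone.\<close>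
      define Pi where "Pi = matrix_inv P"
      have sPi: "transpose Pi = Pi" unfolding Pi_def congruent_mat1_inverse(3)[OF WPW]
        by (simp add: matrix_transpose_mul)
      define \<delta> where "\<delta> = e / (2 * (norm Pi + 1))"
      have "\<delta> > 0" unfolding \<delta>_def using \<open>e > 0\<close> by (simp add: add_nonneg_pos)
      have "\<delta> * norm Pi < e"
      proof -
        have "\<delta> * norm Pi \<le> \<delta> * (norm Pi + 1)" using \<open>\<delta> > 0\<close> by simp
        also have "\<dots> = e / 2"
          unfolding \<delta>_def using add_nonneg_pos[OF norm_ge_zero[of Pi] zero_less_one] by (simp add: field_simps)
        finally show ?thesis using \<open>e > 0\<close> by simp
      qed
      define Z where "Z = S - \<delta> *\<^sub>R Pi"
      have sZ: "transpose Z = Z" unfolding Z_def using sS sPi by (simp add: transpose_diff transpose_scalar)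
      have "dist Z S < e" unfolding Z_def dist_norm using \<open>\<delta> > 0\<close> \<open>\<delta> * norm Pi < e\<close> by simp
      then have "T Z \<in> circular_cone (mat 1) s" using ball[OF sZ] member[OF sZ] by simp
      moreover have "T Z = T S - \<delta> *\<^sub>R mat 1"
      proof -
        have "T Pi = transpose W ** P ** (Pi ** P) ** W"
          unfolding T_def by (simp add: matrix_mul_assoc)
        then have "T Pi = mat 1" using WPW by (simp add: Pi_def PiP)
        then show ?thesis unfolding Z_def T_def by (simp add: matrix_mult_distribs)
      qed
      ultimately show False
        using boundary_circular_cone_shift[OF inner_mat1_mat1 \<beta>(1) s(1) s(2) _ \<open>\<delta> > 0\<close>] boundary
        by simp
    qed
  next
    assume "s * norm (T S) < mat 1 \<bullet> T S"
    moreover have "continuous_on UNIV (\<lambda>Z. mat 1 \<bullet> T Z - s * norm (T Z))"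
      unfolding T_def by (intro continuous_intros continuous_on_matrix_mult)
    ultimately show "S \<in> sym_top interior_of D"
      using member by (intro in_sym_top_interior_of[OF _ _ sS]) (auto simp: circular_cone_def)
  qed
  then show ?thesis unfolding D_def trT nT s_def .
qed

context
  fixes E X :: "real^'n^'n"
  assumes E: "E \<in> pos_def" and sX: "transpose X = X"
begin

lemma trace_square_eq_normE_square:
  "trace ((matrix_inv E ** X) ** (matrix_inv E ** X)) = normE E X ^ 2"
proof -
  obtain W :: "real^'n^'n" where WEW: "transpose W ** E ** W = mat 1" using pos_def_congruent_mat1[OF E] by blast
  show ?thesis
    unfolding normE_congruence[OF WEW sX] trace_square_congruence[OF WEW sX] ..
qed

lemma normE_pos:
  assumes "X \<noteq> 0"
  shows "normE E X > 0"
proof -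
  obtain W :: "real^'n^'n" where WEW: "transpose W ** E ** W = mat 1" using pos_def_congruent_mat1[OF E] by blast
  have "transpose W ** X ** W \<noteq> 0"
  proof
    assume Y: "transpose W ** X ** W = 0"
    have "X = (E ** W ** transpose W) ** X ** (W ** transpose W ** E)"
      using congruent_mat1_inverse(1,2)[OF WEW] by simp
    also have "\<dots> = (E ** W) ** (transpose W ** X ** W) ** (transpose W ** E)"
      by (simp add: matrix_mul_assoc)
    finally show False using Y assms by simp
  qed
  then show ?thesis unfolding normE_congruence[OF WEW sX] by simp
qed

lemma trace_cube_le_normE_cube:
  "trace ((X ** matrix_inv E) ** (X ** matrix_inv E) ** (X ** matrix_inv E)) \<le> normE E X ^ 3"
proof -
  obtain W :: "real^'n^'n" where WEW: "transpose W ** E ** W = mat 1" using pos_def_congruent_mat1[OF E] by blast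
  define Y where "Y = transpose W ** X ** W"
  have "trace ((X ** matrix_inv E) ** (X ** matrix_inv E) ** (X ** matrix_inv E))
      = trace ((X ** W ** transpose W ** X ** W ** transpose W ** X ** W) ** transpose W)"
    unfolding congruent_mat1_inverse(3)[OF WEW] by (simp add: matrix_mul_assoc)
  also have "\<dots> = trace (transpose W ** (X ** W ** transpose W ** X ** W ** transpose W ** X ** W))"
    by (rule trace_mul_sym)
  also have "\<dots> = trace (Y ** Y ** Y)"
    unfolding Y_def by (simp add: matrix_mul_assoc)
  also have "\<dots> \<le> norm Y ^ 3" unfolding Y_def by (rule trace_cube_le_norm_cube[OF transpose_congruence[OF sX]])
  finally show ?thesis unfolding Y_def normE_congruence[OF WEW sX] .
qed

lemma quadratic_form_le_normE:
  "x \<bullet> ((matrix_inv E ** X ** matrix_inv E) *v x) \<le> normE E X * (x \<bullet> (matrix_inv E *v x))"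
proof -
  obtain W :: "real^'n^'n" where WEW: "transpose W ** E ** W = mat 1" using pos_def_congruent_mat1[OF E] by blast
  define z where "z = transpose W *v x"
  have xW: "x \<bullet> (W *v v) = z \<bullet> v" for v unfolding z_def by (rule inner_matrix_vector_transpose)
  have "matrix_inv E *v x = W *v z"
    unfolding congruent_mat1_inverse(3)[OF WEW] z_def
    by (simp add: matrix_vector_mul_assoc del: transpose_matrix_vector)
  moreover have "(matrix_inv E ** X ** matrix_inv E) *v x = W *v ((transpose W ** X ** W) *v z)"
    unfolding congruent_mat1_inverse(3)[OF WEW] z_def
    by (simp add: matrix_vector_mul_assoc matrix_mul_assoc del: transpose_matrix_vector)
  ultimately have "x \<bullet> (matrix_inv E *v x) = z \<bullet> z"
    and "x \<bullet> ((matrix_inv E ** X ** matrix_inv E) *v x) = z \<bullet> ((transpose W ** X ** W) *v z)"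
    by (simp_all add: xW)
  then show ?thesis unfolding normE_congruence[OF WEW sX] by (simp add: quadratic_form_le_norm)
qed

end

lemma matrix_inv_pos_def:
  fixes E :: "real^'n^'n"
  assumes E: "E \<in> pos_def"
  shows "matrix_inv E \<in> pos_def"
proof -
  obtain W :: "real^'n^'n" where WEW: "transpose W ** E ** W = mat 1"
    using pos_def_congruent_mat1[OF E] by blast
  show ?thesis
    unfolding pos_def_def congruent_mat1_inverse(3)[OF WEW]
  proof (intro CollectI conjI allI impI)
    show "transpose (W ** transpose W) = W ** transpose W" by (simp add: matrix_transpose_mul)
    fix x :: "real^'n" assume "x \<noteq> 0"
    have "x = (E ** W) *v (transpose W *v x)"
      using congruent_mat1_inverse(2)[OF WEW] by (simp add: matrix_vector_mul_assoc del: transpose_matrix_vector)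
    then have "transpose W *v x \<noteq> 0" using \<open>x \<noteq> 0\<close> by auto
    moreover have "x \<bullet> ((W ** transpose W) *v x) = (transpose W *v x) \<bullet> (transpose W *v x)"
      by (simp add: inner_matrix_vector_transpose flip: matrix_vector_mul_assoc del: transpose_matrix_vector)
    ultimately show "x \<bullet> ((W ** transpose W) *v x) > 0" by simp
  qed
qed

lemma trace_square_affine:
  fixes A B :: "real^'n^'n"
  shows "trace ((A + t *\<^sub>R B) ** (A + t *\<^sub>R B))
    = trace (A ** A) + 2 * t * trace (B ** A) + t^2 * trace (B ** B)"
  by (simp add: matrix_mult_distribs trace_add trace_scaleR trace_mul_sym[of A B])
    (simp add: power2_eq_square algebra_simps)

lemma trace_square_mat1_minus:
  fixes A :: "real^'n^'n"
  shows "trace ((c *\<^sub>R (mat 1 - k *\<^sub>R A)) ** (c *\<^sub>R (mat 1 - k *\<^sub>R A)))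
     = c^2 * (real CARD('n) - 2 * k * trace A + k^2 * trace (A ** A))"
  by (simp add: matrix_mult_distribs trace_add trace_sub trace_scaleR trace_I)
     (simp add: power2_eq_square algebra_simps)

lemma trace_mult_mat1_minus:
  fixes A :: "real^'n^'n"
  shows "trace ((c *\<^sub>R (A - k *\<^sub>R (A ** A))) ** (c *\<^sub>R (mat 1 - k *\<^sub>R A)))
     = c^2 * (trace A - 2 * k * trace (A ** A) + k^2 * trace (A ** A ** A))"
  by (simp add: matrix_mult_distribs trace_add trace_sub trace_scaleR matrix_mul_assoc)
     (simp add: power2_eq_square algebra_simps)

lemma trace_mult_factorization:
  fixes N R :: "real^'n^'n"
  assumes "transpose N = N"
  shows "trace (N ** (R ** transpose R)) = trace (transpose R ** N ** R)"
    and "trace ((N ** (R ** transpose R)) ** (N ** (R ** transpose R)))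
      = norm (transpose R ** N ** R) ^ 2"
proof -
  show "trace (N ** (R ** transpose R)) = trace (transpose R ** N ** R)"
    using trace_mul_sym[of "N ** R" "transpose R"] by (simp add: matrix_mul_assoc)
  have "trace ((N ** (R ** transpose R)) ** (N ** (R ** transpose R)))
      = trace ((N ** R ** transpose R ** N ** R) ** transpose R)"
    by (simp add: matrix_mul_assoc)
  also have "\<dots> = trace ((transpose R ** N ** R) ** (transpose R ** N ** R))"
    using trace_mul_sym[of "N ** R ** transpose R ** N ** R" "transpose R"] by (simp add: matrix_mul_assoc)
  also have "\<dots> = norm (transpose R ** N ** R) ^ 2"
    unfolding power2_norm_eq_inner by (rule trace_mult_eq_inner[OF transpose_congruence[OF assms]])
  finally show "trace ((N ** (R ** transpose R)) ** (N ** (R ** transpose R)))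
      = norm (transpose R ** N ** R) ^ 2" .
qed

lemma strict_convex_on_quadratic:
  fixes a b c :: real
  assumes "c > 0"
  shows "strict_convex_on UNIV (\<lambda>t. a + 2 * b * t + c * t^2)"
  unfolding strict_convex_on_def
proof (intro conjI ballI allI impI)
  fix x y u :: real assume "x \<noteq> y" "0 < u" "u < 1"
  have "(1 - u) * (a + 2 * b * x + c * x^2) + u * (a + 2 * b * y + c * y^2)
      - (a + 2 * b * ((1 - u) * x + u * y) + c * ((1 - u) * x + u * y)^2) = c * (u * (1 - u) * (x - y)^2)"
    by (simp add: power2_eq_square algebra_simps)
  moreover have "c * (u * (1 - u) * (x - y)^2) > 0" using assms \<open>x \<noteq> y\<close> \<open>0 < u\<close> \<open>u < 1\<close> by simp
  ultimately show "a + 2 * b * ((1 - u) * x + u * y) + c * ((1 - u) * x + u * y)^2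
      < (1 - u) * (a + 2 * b * x + c * x^2) + u * (a + 2 * b * y + c * y^2)" by linarith
qed simp

lemma pos_def_mult_matrix_inv:
  fixes E :: "real^'n^'n"
  assumes "E \<in> pos_def"
  shows "E ** matrix_inv E = mat 1"
proof -
  obtain W :: "real^'n^'n" where WEW: "transpose W ** E ** W = mat 1"
    using pos_def_congruent_mat1[OF assms] by blast
  show ?thesis
    using congruent_mat1_inverse(2,3)[OF WEW] by (simp add: matrix_mul_assoc)
qed

section \<open>The dual certificate of a boundary point\<close>

locale cone_boundary_point =
  fixes E X :: "real^'n^'n" and \<alpha> :: real
  assumes E: "E \<in> pos_def" and \<alpha>: "0 < \<alpha>" "\<alpha> < 1"
    and X_nz: "X \<noteq> 0" and X_sym: "transpose X = X"
    and X_boundary: "trace (matrix_inv E ** X) = \<alpha> * normE E X"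
begin

definition S :: "real^'n^'n" where
  "S = (1 / (real CARD('n) - \<alpha>\<^sup>2)) *\<^sub>R
     (matrix_inv E - (\<alpha>\<^sup>2 / trace (matrix_inv E ** X)) *\<^sub>R (matrix_inv E ** X ** matrix_inv E))"

definition q :: "real \<Rightarrow> real" where
  "q t = trace (((E + t *\<^sub>R X) ** S) ** ((E + t *\<^sub>R X) ** S))"

lemma normE_X_pos: "normE E X > 0"
  by (rule normE_pos[OF E X_sym X_nz])

lemma card_minus_alpha_sq_pos: "real CARD('n) - \<alpha>^2 > 0"
  using complementary_aperture(1)[OF \<alpha>] by simp

lemma trace_X_mult_inv_E: "trace (X ** matrix_inv E) = \<alpha> * normE E X"
  using X_boundary trace_mul_sym[of X "matrix_inv E"] by simp

lemma trace_square_X_mult_inv_E: "trace ((X ** matrix_inv E) ** (X ** matrix_inv E)) = normE E X^2"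
  using trace_square_eq_normE_square[OF E X_sym] trace_mul_sym[of X "matrix_inv E ** X ** matrix_inv E"]
  by (simp add: matrix_mul_assoc)

lemma S_eq:
  "S = (1 / (real CARD('n) - \<alpha>^2)) *\<^sub>R
     (matrix_inv E - (\<alpha> / normE E X) *\<^sub>R (matrix_inv E ** X ** matrix_inv E))"
  unfolding S_def X_boundary using normE_X_pos \<alpha> by (simp add: power2_eq_square)

lemma S_symmetric: "transpose S = S"
proof -
  have "transpose (matrix_inv E) = matrix_inv E" using pos_defD(1)[OF matrix_inv_pos_def[OF E]] .
  then show ?thesis unfolding S_eq
    by (simp add: transpose_scalar transpose_diff matrix_transpose_mul X_sym matrix_mul_assoc)
qed

lemma E_mult_S:
  "E ** S = (1 / (real CARD('n) - \<alpha>^2)) *\<^sub>R (mat 1 - (\<alpha> / normE E X) *\<^sub>R (X ** matrix_inv E))"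
  unfolding S_eq by (simp add: matrix_mult_distribs matrix_mul_assoc pos_def_mult_matrix_inv[OF E])

lemma X_mult_S:
  "X ** S = (1 / (real CARD('n) - \<alpha>^2)) *\<^sub>R
     (X ** matrix_inv E - (\<alpha> / normE E X) *\<^sub>R ((X ** matrix_inv E) ** (X ** matrix_inv E)))"
  unfolding S_eq by (simp add: matrix_mult_distribs matrix_mul_assoc)

lemma trace_E_mult_S: "trace (E ** S) = 1"
  using normE_X_pos card_minus_alpha_sq_pos
  by (simp add: E_mult_S trace_scaleR trace_sub trace_I trace_X_mult_inv_E power2_eq_square)

lemma trace_X_mult_S: "trace (X ** S) = 0"
  using normE_X_pos
  by (simp add: X_mult_S trace_scaleR trace_sub trace_X_mult_inv_E trace_square_X_mult_inv_E power2_eq_square)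

lemma S_pos_def: "S \<in> pos_def"
  unfolding pos_def_def
proof (intro CollectI conjI allI impI)
  show "transpose S = S" by (rule S_symmetric)
  fix x :: "real^'n" assume "x \<noteq> 0"
  then have pos: "x \<bullet> (matrix_inv E *v x) > 0" using pos_defD(2)[OF matrix_inv_pos_def[OF E]] by blast
  have "(\<alpha> / normE E X) * (x \<bullet> ((matrix_inv E ** X ** matrix_inv E) *v x))
      \<le> (\<alpha> / normE E X) * (normE E X * (x \<bullet> (matrix_inv E *v x)))"
    using quadratic_form_le_normE[OF E X_sym] \<alpha> normE_X_pos by (intro mult_left_mono) auto
  also have "\<dots> < x \<bullet> (matrix_inv E *v x)" using normE_X_pos \<alpha> pos by simp
  finally show "x \<bullet> (S *v x) > 0"
    unfolding S_eq using card_minus_alpha_sq_pos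
    by (simp add: scaleR_matrix_vector_assoc[symmetric] matrix_vector_mult_diff_rdistrib inner_diff_right)
qed

lemma q_expand:
  "q t = trace ((E ** S) ** (E ** S)) + 2 * trace ((X ** S) ** (E ** S)) * t
     + trace ((X ** S) ** (X ** S)) * t^2"
proof -
  have affine: "(E + t *\<^sub>R X) ** S = E ** S + t *\<^sub>R (X ** S)"
    by (simp add: matrix_add_rdistrib matrix_scaleR_left)
  show ?thesis unfolding q_def affine trace_square_affine by simp
qed

lemma q_0: "q 0 = 1 / (real CARD('n) - \<alpha>^2)"
proof -
  have "q 0 = (1 / (real CARD('n) - \<alpha>^2))^2
      * (real CARD('n) - 2 * (\<alpha> / normE E X) * (\<alpha> * normE E X) + (\<alpha> / normE E X)^2 * normE E X^2)"
    unfolding q_expand E_mult_S trace_square_mat1_minus trace_X_mult_inv_E trace_square_X_mult_inv_E by simp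
  also have "\<dots> = (1 / (real CARD('n) - \<alpha>^2))^2 * (real CARD('n) - \<alpha>^2)"
    using normE_X_pos by (simp add: power2_eq_square field_simps)
  finally show ?thesis using card_minus_alpha_sq_pos by (simp add: power2_eq_square)
qed

lemma q_slope_neg: "trace ((X ** S) ** (E ** S)) < 0"
proof -
  define k where "k = \<alpha> / normE E X"
  define c where "c = 1 / (real CARD('n) - \<alpha>^2)"
  have "trace ((X ** S) ** (E ** S))
      = c^2 * (\<alpha> * normE E X - 2 * k * normE E X ^ 2
          + k^2 * trace ((X ** matrix_inv E) ** (X ** matrix_inv E) ** (X ** matrix_inv E)))"
    unfolding X_mult_S E_mult_S trace_mult_mat1_minus trace_X_mult_inv_E trace_square_X_mult_inv_E k_def c_def ..
  also have "\<dots> \<le> c^2 * (\<alpha> * normE E X - 2 * k * normE E X ^ 2 + k^2 * normE E X ^ 3)"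
    using trace_cube_le_normE_cube[OF E X_sym] by (intro mult_left_mono add_left_mono) auto
  also have "\<dots> = c^2 * (\<alpha> * normE E X * (\<alpha> - 1))"
    unfolding k_def using normE_X_pos by (simp add: field_simps power2_eq_square power3_eq_cube)
  also have "\<dots> < 0"
    using normE_X_pos \<alpha> card_minus_alpha_sq_pos unfolding c_def by (simp add: mult_pos_neg)
  finally show ?thesis .
qed

lemma S_factorization:
  obtains R :: "real^'n^'n" where "invertible R" "S = R ** transpose R"
  using pos_def_factorization[OF S_pos_def] by blast

lemma q_curvature_pos: "trace ((X ** S) ** (X ** S)) > 0"
proof -
  obtain R :: "real^'n^'n" where R: "invertible R" "S = R ** transpose R" by (rule S_factorization)
  have "transpose R ** X ** R \<noteq> 0"
  proof
    assume RXR: "transpose R ** X ** R = 0"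
    have "X = transpose (R ** matrix_inv R) ** X ** (R ** matrix_inv R)"
      using invertible_matrix_inv(1)[OF R(1)] by simp
    also have "\<dots> = transpose (matrix_inv R) ** (transpose R ** X ** R) ** matrix_inv R"
      by (simp add: matrix_transpose_mul matrix_mul_assoc)
    finally show False using RXR X_nz by simp
  qed
  then show ?thesis using trace_mult_factorization(2)[OF X_sym, of R] R(2) by simp
qed

lemma q_quadratic:
  "q = (\<lambda>t. 1 / (real CARD('n) - \<alpha>^2) + 2 * trace ((X ** S) ** (E ** S)) * t
     + trace ((X ** S) ** (X ** S)) * t^2)"
  using q_expand q_0 by (auto simp: fun_eq_iff q_expand)

lemma trace_pencil_mult_S: "trace ((E + t *\<^sub>R X) ** S) = 1"
  by (simp add: matrix_add_rdistrib matrix_scaleR_left trace_add trace_scaleR trace_E_mult_S trace_X_mult_S)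

lemma pencil_symmetric: "transpose (E + t *\<^sub>R X) = E + t *\<^sub>R X"
  using pos_defD(1)[OF E] X_sym by (simp add: transpose_add transpose_scalar)

lemma q_eq_norm_squared:
  fixes R :: "real^'n^'n"
  assumes "S = R ** transpose R"
  shows "q t = norm (transpose R ** (E + t *\<^sub>R X) ** R) ^ 2"
  unfolding q_def assms by (rule trace_mult_factorization(2)[OF pencil_symmetric])

lemma pos_def_if_q_lt:
  assumes \<beta>: "0 < \<beta>" "\<beta> < 1" and t: "t > -1" and q: "q t < 1 / (real CARD('n) - \<beta>^2)"
  shows "(1 / (1 + t)) *\<^sub>R (E + t *\<^sub>R X) \<in> pos_def"
proof -
  obtain R :: "real^'n^'n" where R: "invertible R" "S = R ** transpose R" by (rule S_factorization)
  define M where "M = transpose R ** (E + t *\<^sub>R X) ** R"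
  have "trace M = 1"
    using trace_mult_factorization(1)[OF pencil_symmetric] trace_pencil_mult_S R(2) unfolding M_def by metis
  moreover have "(real CARD('n) - 1) * (M \<bullet> M) < 1"
  proof -
    have "\<beta>^2 < 1" using \<beta> by (simp add: power_less_one_iff abs_less_iff)
    then have "(real CARD('n) - 1) * (M \<bullet> M) \<le> (real CARD('n) - \<beta>^2) * q t"
      unfolding q_eq_norm_squared[OF R(2)] M_def power2_norm_eq_inner by (intro mult_right_mono) auto
    also have "\<dots> < 1"
      using q complementary_aperture(1)[where 'n='n, OF \<beta>] by (simp add: pos_less_divide_eq mult.commute)
    finally show ?thesis .
  qed
  ultimately have "M \<in> pos_def"
    unfolding pos_def_def using trace_one_quadratic_form_pos transpose_congruence[OF pencil_symmetric]
    by (auto simp: M_def)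
  then have "E + t *\<^sub>R X \<in> pos_def"
    using pos_def_of_congruence[OF R(1) pencil_symmetric] unfolding M_def by blast
  then show ?thesis using t by (intro pos_def_scaleR) auto
qed

lemma interior_dual_coneK_iff_q_lt:
  assumes \<beta>: "0 < \<beta>" "\<beta> < 1" and t: "t > -1"
    and pd: "(1 / (1 + t)) *\<^sub>R (E + t *\<^sub>R X) \<in> pos_def"
  shows "S \<in> sym_top interior_of dual_cone (coneK ((1 / (1 + t)) *\<^sub>R (E + t *\<^sub>R X)) \<beta>)
    \<longleftrightarrow> q t < 1 / (real CARD('n) - \<beta>^2)"
proof -
  define s where "s = sqrt (real CARD('n) - \<beta>^2)"
  have s: "s > 0" "s^2 = real CARD('n) - \<beta>^2"
    unfolding s_def using complementary_aperture[where 'n='n, OF \<beta>] by auto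
  obtain R :: "real^'n^'n" where R: "S = R ** transpose R" using S_factorization by blast
  have "q t \<ge> 0" unfolding q_eq_norm_squared[OF R] by simp
  have sqrt_q: "sqrt (q t / ((1 + t) * (1 + t))) = sqrt (q t) / (1 + t)"
    using t by (simp add: real_sqrt_divide)
  have EtS: "(1 / (1 + t)) *\<^sub>R (E + t *\<^sub>R X) ** S = (1 / (1 + t)) *\<^sub>R ((E + t *\<^sub>R X) ** S)"
    by (rule matrix_scaleR_left)
  have "S \<in> sym_top interior_of dual_cone (coneK ((1 / (1 + t)) *\<^sub>R (E + t *\<^sub>R X)) \<beta>)
      \<longleftrightarrow> s * ((1 / (1 + t)) * sqrt (q t)) < (1 / (1 + t)) * 1"
    unfolding interior_dual_coneK_iff[OF pd \<beta> S_symmetric] EtS s_def[symmetric]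
    using t by (simp add: matrix_scaleR_left matrix_scaleR_right trace_scaleR trace_pencil_mult_S
        power2_eq_square q_def[symmetric] sqrt_q)
  also have "\<dots> \<longleftrightarrow> s * sqrt (q t) < 1"
    using t by (simp add: divide_less_cancel)
  also have "\<dots> \<longleftrightarrow> (s * sqrt (q t))^2 < 1"
    using s(1) \<open>q t \<ge> 0\<close> by (simp add: power_less_one_iff)
  also have "\<dots> \<longleftrightarrow> (real CARD('n) - \<beta>^2) * q t < 1"
    using s(2) \<open>q t \<ge> 0\<close> by (simp add: power_mult_distrib)
  also have "\<dots> \<longleftrightarrow> q t < 1 / (real CARD('n) - \<beta>^2)"
    using s(2) zero_less_power[OF s(1), of 2] by (simp add: pos_less_divide_eq mult.commute)
  finally show ?thesis .
qed

end

theorem proposition4p5: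
  fixes E X :: "real^'n^'n" and \<alpha> :: real
  assumes "E \<in> pos_def" and "0 < \<alpha>" and "\<alpha> < 1"
    and "X \<noteq> 0" and "X \<in> sym_top frontier_of (coneK E \<alpha>)"
  shows "let n = real CARD('n);
             Ei = matrix_inv E;
             S = (1 / (n - \<alpha>\<^sup>2)) *\<^sub>R (Ei - (\<alpha>\<^sup>2 / trace (Ei ** X)) *\<^sub>R (Ei ** X ** Ei));
             q = (\<lambda>t::real. trace (((E + t *\<^sub>R X) ** S) ** ((E + t *\<^sub>R X) ** S)));
             Et = (\<lambda>t::real. (1 / (1 + t)) *\<^sub>R (E + t *\<^sub>R X))
         in (\<forall>\<beta> t. 0 < \<beta> \<longrightarrow> \<beta> < 1 \<longrightarrow> t > -1 \<longrightarrow>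
                 ((Et t \<in> pos_def \<and> S \<in> sym_top interior_of (dual_cone (coneK (Et t) \<beta>)))
                  \<longleftrightarrow> q t < 1 / (n - \<beta>\<^sup>2)))
            \<and> strict_convex_on UNIV q
            \<and> q 0 = 1 / (n - \<alpha>\<^sup>2)
            \<and> (\<exists>d. (q has_real_derivative d) (at 0) \<and> d < 0)"
proof -
  interpret cone_boundary_point E X \<alpha>
    using assms frontier_coneK[OF assms(5)] by unfold_locales auto
  have "q t < 1 / (real CARD('n) - \<beta>\<^sup>2) \<longleftrightarrow> (1 / (1 + t)) *\<^sub>R (E + t *\<^sub>R X) \<in> pos_def
      \<and> S \<in> sym_top interior_of dual_cone (coneK ((1 / (1 + t)) *\<^sub>R (E + t *\<^sub>R X)) \<beta>)"
    if "0 < \<beta>" "\<beta> < 1" "t > -1" for \<beta> t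
    using pos_def_if_q_lt[OF that] interior_dual_coneK_iff_q_lt[OF that] by blast
  moreover have "strict_convex_on UNIV q"
    unfolding q_quadratic by (rule strict_convex_on_quadratic[OF q_curvature_pos])
  moreover have "(q has_real_derivative 2 * trace ((X ** S) ** (E ** S))) (at 0)"
    unfolding q_quadratic by (auto intro!: derivative_eq_intros)
  ultimately show ?thesis
    unfolding Let_def S_def[symmetric] q_def[symmetric] using q_0 q_slope_neg by auto
qed

end
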